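(* Let $s>2$ be an integer, $A_s=\{0,1,\dots,s-1\}$, and let $A_0,A_1$ be disjoint subsets of $A_s$ with $A_0\cup A_1=A_s$, $A_0\neq A_s\neq A_1$. Let $f:[0,1]\to[0,1]$ be defined by $$f\big(\Delta^{s*}_{\alpha_1\alpha_2\dots\alpha_n\dots}\big)=\Delta^{2*}_{\beta_1\beta_2\dots\beta_n\dots},$$ where $\beta_1=0$ if $\alpha_1\in A_0$, $\beta_1=1$ if $\alpha_1\in A_1$, and for $n\ge 1$, $\beta_{n+1}=\beta_n$ if $\alpha_{n+1}=\alpha_n$ and $\beta_{n+1}=1-\beta_n$ if $\alpha_{n+1}\neq\alpha_n$. Then: (i) the range of $f$ is $f([0,1])=[0,1]$; (ii) the image under $f$ of every $s*$-cylinder $\Delta^{s*}_{c_1\dots c_m}$ is a $2*$-cylinder; (iii) $f$ has finite level sets and level sets of the cardinality of the continuum, i.e. there exists $y\in[0,1]$ with $f^{-1}(y)$ nonempty and finite, and there exists $y\in[0,1]$ with $f^{-1}(y)$ of cardinality of the continuum.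
   Context: $L_s=A_s\times A_s\times\cdots$ denotes the space of sequences $(\alpha_n)$ with $\alpha_n\in A_s$. The $s*$-representation is an encoding of $[0,1]$ topologically equivalent to the classical $s$-adic one: there is a continuous strictly monotone surjection $h_s:[0,1]\to[0,1]$ such that $\Delta^{s*}_{\alpha_1\alpha_2\dots}=h_s\big(\sum_{n\ge1}\alpha_n s^{-n}\big)$ for every $(\alpha_n)\in L_s$; a sequence $(\alpha_n)$ with $x=\Delta^{s*}_{\alpha_1\alpha_2\dots}$ is called an $s*$-code of $x$. Likewise the $2*$-representation is given by a continuous strictly monotone surjection $h_2:[0,1]\to[0,1]$ via $\Delta^{2*}_{\beta_1\beta_2\dots}=h_2\big(\sum_{n\ge1}\beta_n 2^{-n}\big)$, $\beta_n\in\{0,1\}$. An $s*$-cylinder of rank $m$ with base $c_1\dots c_m$ is $\Delta^{s*}_{c_1\dots c_m}=\{\Delta^{s*}_{c_1\dots c_m\alpha_1\alpha_2\dots}:(\alpha_n)\in L_s\}$; $2*$-cylinders $\Delta^{2*}_{\beta_1\dots\beta_m}$ are defined analogously. The value of $f(x)$ given by the formula does not depend on which $s*$-code of $x$ is used, so $f$ is a well-defined function on $[0,1]$. *)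

theory Defs
  imports "HOL-Analysis.Analysis" "HOL-Library.Equipollence"
begin

text \<open>Sequences are 0-indexed: alpha n stands for the paper's digit alpha_(n+1).\<close>

definition Ls :: "nat \<Rightarrow> (nat \<Rightarrow> nat) set" where
  "Ls s = {\<alpha>. \<forall>n. \<alpha> n < s}"

definition sval :: "nat \<Rightarrow> (nat \<Rightarrow> nat) \<Rightarrow> real" where
  "sval s \<alpha> = (\<Sum>n. real (\<alpha> n) / real s ^ Suc n)"

definition encoding_map :: "(real \<Rightarrow> real) \<Rightarrow> bool" where
  "encoding_map h \<longleftrightarrow> continuous_on {0..1} h \<and> h ` {0..1} = {0..1} \<and>
     (strict_mono_on {0..1} h \<or> (\<forall>x\<in>{0..1}. \<forall>y\<in>{0..1}. x < y \<longrightarrow> h y < h x))"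

definition DeltaS :: "(real \<Rightarrow> real) \<Rightarrow> nat \<Rightarrow> (nat \<Rightarrow> nat) \<Rightarrow> real" where
  "DeltaS hs s \<alpha> = hs (sval s \<alpha>)"

definition Delta2 :: "(real \<Rightarrow> real) \<Rightarrow> (nat \<Rightarrow> nat) \<Rightarrow> real" where
  "Delta2 h2 \<beta> = h2 (sval 2 \<beta>)"

fun beta :: "nat set \<Rightarrow> (nat \<Rightarrow> nat) \<Rightarrow> nat \<Rightarrow> nat" where
  "beta A0 \<alpha> 0 = (if \<alpha> 0 \<in> A0 then 0 else 1)"
| "beta A0 \<alpha> (Suc n) = (if \<alpha> (Suc n) = \<alpha> n then beta A0 \<alpha> n else 1 - beta A0 \<alpha> n)"

definition fmap :: "nat \<Rightarrow> (real \<Rightarrow> real) \<Rightarrow> (real \<Rightarrow> real) \<Rightarrow> nat set \<Rightarrow> real \<Rightarrow> real" where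
  "fmap s hs h2 A0 x = Delta2 h2 (beta A0 (SOME \<alpha>. \<alpha> \<in> Ls s \<and> DeltaS hs s \<alpha> = x))"

definition cylS :: "(real \<Rightarrow> real) \<Rightarrow> nat \<Rightarrow> nat list \<Rightarrow> real set" where
  "cylS hs s c = {DeltaS hs s \<alpha> | \<alpha>. \<alpha> \<in> Ls s \<and> (\<forall>i<length c. \<alpha> i = c ! i)}"

definition cyl2 :: "(real \<Rightarrow> real) \<Rightarrow> nat list \<Rightarrow> real set" where
  "cyl2 h2 b = {Delta2 h2 \<beta> | \<beta>. \<beta> \<in> Ls 2 \<and> (\<forall>i<length b. \<beta> i = b ! i)}"

end

theory Submission
  imports Defs
begin

text \<open>Write \<open>x = h\<^sub>s(\<Sigma> \<alpha>\<^sub>n s\<^sup>-\<^sup>n)\<close>. Then \<open>f(x) = h\<^sub>2(\<Sigma> \<beta>\<^sub>n 2\<^sup>-\<^sup>n)\<close> does not depend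
  on the code \<open>\<alpha>\<close>: two different codes of one point agree up to some position \<open>k\<close> and are
  constant, after a jump, from \<open>k + 1\<close> on; their \<open>\<beta>\<close>-sequences are then the two binary codes of
  the same dyadic rational. Conversely, any binary sequence whose prefix is compatible with a
  given digit prefix is the \<open>\<beta>\<close>-sequence of a code with that prefix: repeat the previous digit
  where \<open>\<beta>\<close> repeats and change it where \<open>\<beta>\<close> switches. This gives the range and the
  images of cylinders. The level set of \<open>h\<^sub>2(0)\<close> consists of the constant codes with digit
  in \<open>A\<^sub>0\<close>, so it is finite. Every code starting in \<open>A\<^sub>0\<close> with all consecutive digits
  distinct is mapped to \<open>h\<^sub>2(0.0101\<dots>\<^sub>2)\<close>; with three digits there are continuum many such
  codes, and they represent distinct points because none of them has a constant tail.\<close>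

lemma Ls_shift: "\<alpha> \<in> Ls s \<Longrightarrow> (\<lambda>n. \<alpha> (n + k)) \<in> Ls s"
  unfolding Ls_def by auto

lemma const_in_Ls: "a < s \<Longrightarrow> (\<lambda>_. a) \<in> Ls s"
  unfolding Ls_def by simp

lemma Ls_le_pred: "\<alpha> \<in> Ls s \<Longrightarrow> \<alpha> n \<le> s - 1"
  by (cases s) (auto simp: Ls_def less_Suc_eq_le)

lemma summable_sval:
  assumes "2 \<le> s" "\<alpha> \<in> Ls s"
  shows "summable (\<lambda>n. real (\<alpha> n) / real s ^ Suc n)"
proof (rule summable_comparison_test')
  show "summable (\<lambda>n. real s * (1 / real s) ^ Suc n)"
    using assms(1) by (intro summable_mult summable_ignore_initial_segment[where k = 1, simplified]) auto
  fix n
  have "real (\<alpha> n) / real s ^ Suc n \<le> real s / real s ^ Suc n"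
    using assms(2) by (intro divide_right_mono) (auto simp: Ls_def less_imp_le)
  then show "norm (real (\<alpha> n) / real s ^ Suc n) \<le> real s * (1 / real s) ^ Suc n"
    by (simp add: power_one_over)
qed

lemma sval_const:
  assumes "2 \<le> s"
  shows "sval s (\<lambda>_. c) = real c / (real s - 1)"
proof -
  have "(\<lambda>n. real c / real s * (1 / real s) ^ n) sums (real c / real s * (1 / (1 - 1 / real s)))"
    using assms by (intro sums_mult geometric_sums) auto
  moreover have "real c / real s * (1 / (1 - 1 / real s)) = real c / (real s - 1)"
    using assms by (simp add: field_simps)
  ultimately show ?thesis
    unfolding sval_def by (simp add: sums_iff power_one_over mult.commute)
qed

lemma sval_le:
  assumes "2 \<le> s" "\<alpha> \<in> Ls s" "\<alpha>' \<in> Ls s" "\<And>n. \<alpha> n \<le> \<alpha>' n"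
  shows "sval s \<alpha> \<le> sval s \<alpha>'"
  unfolding sval_def using assms
  by (intro suminf_le summable_sval) (auto intro: divide_right_mono)

lemma sval_less:
  assumes "2 \<le> s" "\<alpha> \<in> Ls s" "\<alpha>' \<in> Ls s" "\<And>n. \<alpha> n \<le> \<alpha>' n" "\<alpha> k < \<alpha>' k"
  shows "sval s \<alpha> < sval s \<alpha>'"
proof -
  have "0 < (\<Sum>n. real (\<alpha>' n) / real s ^ Suc n - real (\<alpha> n) / real s ^ Suc n)"
    using assms by (intro suminf_pos2[where i = k] summable_diff summable_sval)
      (auto simp: divide_right_mono divide_strict_right_mono)
  also have "\<dots> = sval s \<alpha>' - sval s \<alpha>"
    unfolding sval_def using assms by (intro suminf_diff[symmetric] summable_sval)
  finally show ?thesis by simp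
qed

lemma sval_in_unit:
  assumes "2 \<le> s" "\<alpha> \<in> Ls s"
  shows "sval s \<alpha> \<in> {0..1}"
proof -
  have "sval s (\<lambda>_. 0) \<le> sval s \<alpha>" "sval s \<alpha> \<le> sval s (\<lambda>_. s - 1)"
    using assms Ls_le_pred[OF assms(2)] by (auto intro!: sval_le const_in_Ls)
  then show ?thesis
    using assms(1) by (simp add: sval_const of_nat_diff)
qed

lemma sval_eq_0_iff:
  assumes "2 \<le> s" "\<alpha> \<in> Ls s"
  shows "sval s \<alpha> = 0 \<longleftrightarrow> \<alpha> = (\<lambda>_. 0)"
proof
  assume "sval s \<alpha> = 0"
  moreover have "sval s (\<lambda>_. 0) < sval s \<alpha>" if "0 < \<alpha> k" for k
    using assms that by (intro sval_less[where k = k] const_in_Ls) auto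
  ultimately show "\<alpha> = (\<lambda>_. 0)"
    using assms(1) by (force simp: sval_const)
qed (simp add: sval_def)

lemma sval_eq_1_iff:
  assumes "2 \<le> s" "\<alpha> \<in> Ls s"
  shows "sval s \<alpha> = 1 \<longleftrightarrow> \<alpha> = (\<lambda>_. s - 1)"
proof -
  have "sval s (\<lambda>_. s - 1) = 1"
    using assms(1) by (simp add: sval_const of_nat_diff)
  moreover have "sval s \<alpha> < sval s (\<lambda>_. s - 1)" if "\<alpha> k < s - 1" for k
    using assms that Ls_le_pred[OF assms(2)] by (intro sval_less[where k = k] const_in_Ls) auto
  ultimately show ?thesis
    using Ls_le_pred[OF assms(2)] by (metis le_neq_implies_less less_irrefl)
qed

lemma sval_split:
  assumes "2 \<le> s" "\<alpha> \<in> Ls s"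
  shows "sval s \<alpha> = (\<Sum>n<k. real (\<alpha> n) / real s ^ Suc n) + sval s (\<lambda>n. \<alpha> (n + k)) / real s ^ k"
proof -
  have "sval s (\<lambda>n. \<alpha> (n + k)) / real s ^ k = (\<Sum>n. real (\<alpha> (n + k)) / real s ^ Suc n / real s ^ k)"
    unfolding sval_def using assms by (intro suminf_divide[symmetric] summable_sval Ls_shift)
  also have "\<dots> = (\<Sum>n. real (\<alpha> (n + k)) / real s ^ Suc (n + k))"
    by (simp add: power_add field_simps)
  finally show ?thesis
    unfolding sval_def using suminf_split_initial_segment[OF summable_sval[OF assms], of k] by simp
qed

lemma sval_eq_first_difference:
  assumes s: "2 \<le> s" and \<alpha>: "\<alpha> \<in> Ls s" "\<alpha>' \<in> Ls s" and eq: "sval s \<alpha> = sval s \<alpha>'"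
    and prefix: "\<forall>n<k. \<alpha> n = \<alpha>' n" and less: "\<alpha> k < \<alpha>' k"
  shows "\<alpha>' k = Suc (\<alpha> k) \<and> (\<forall>n>k. \<alpha> n = s - 1 \<and> \<alpha>' n = 0)"
proof -
  define tail where "tail \<gamma> = sval s (\<lambda>n. \<gamma> (n + Suc k))" for \<gamma>
  define head where "head = (\<Sum>n<k. real (\<alpha> n) / real s ^ Suc n)"
  have split: "sval s \<gamma> = head + (real (\<gamma> k) + tail \<gamma>) / real s ^ Suc k"
    if "\<gamma> \<in> Ls s" "\<forall>n<k. \<gamma> n = \<alpha> n" for \<gamma>
    using sval_split[OF s that(1), of "Suc k"] that(2) by (simp add: head_def tail_def add_divide_distrib)
  have "real (\<alpha> k) + tail \<alpha> = real (\<alpha>' k) + tail \<alpha>'"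
    using eq split[OF \<alpha>(1)] split[OF \<alpha>(2)] prefix s by simp
  moreover have "tail \<alpha> \<le> 1" "0 \<le> tail \<alpha>'"
    unfolding tail_def using sval_in_unit[OF s Ls_shift, of _ "Suc k"] \<alpha> by auto
  ultimately have "tail \<alpha> = 1" "tail \<alpha>' = 0" "\<alpha>' k = Suc (\<alpha> k)"
    using less by linarith+
  then have "(\<lambda>n. \<alpha> (n + Suc k)) = (\<lambda>_. s - 1)" "(\<lambda>n. \<alpha>' (n + Suc k)) = (\<lambda>_. 0)"
    unfolding tail_def using sval_eq_1_iff sval_eq_0_iff s Ls_shift \<alpha> by blast+
  then have "\<alpha> (m + Suc k) = s - 1 \<and> \<alpha>' (m + Suc k) = 0" for m
    by (metis (mono_tags))
  moreover have "n = (n - Suc k) + Suc k" if "k < n" for n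
    using that by simp
  ultimately show ?thesis
    using \<open>\<alpha>' k = Suc (\<alpha> k)\<close> by metis
qed

definition settles_at :: "(nat \<Rightarrow> nat) \<Rightarrow> nat \<Rightarrow> bool" where
  "settles_at \<alpha> k \<longleftrightarrow> \<alpha> (Suc k) \<noteq> \<alpha> k \<and> (\<forall>n>k. \<alpha> n = \<alpha> (Suc k))"

lemma settles_atD:
  assumes "settles_at \<alpha> k"
  shows "\<alpha> (Suc k) \<noteq> \<alpha> k" and "\<And>n. k < n \<Longrightarrow> \<alpha> n = \<alpha> (Suc k)"
  using assms unfolding settles_at_def by blast+

lemma sval_eq_imp_settles_at:
  assumes s: "2 \<le> s" and \<alpha>: "\<alpha> \<in> Ls s" "\<alpha>' \<in> Ls s" and eq: "sval s \<alpha> = sval s \<alpha>'"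
    and "\<alpha> \<noteq> \<alpha>'"
  obtains k where "\<forall>n<k. \<alpha> n = \<alpha>' n" "settles_at \<alpha> k" "settles_at \<alpha>' k"
proof -
  obtain k where prefix: "\<forall>n<k. \<alpha> n = \<alpha>' n" and "\<alpha> k \<noteq> \<alpha>' k"
    using exists_least_iff[of "\<lambda>n. \<alpha> n \<noteq> \<alpha>' n"] \<open>\<alpha> \<noteq> \<alpha>'\<close> by blast
  have both_settle: "settles_at \<gamma> k \<and> settles_at \<gamma>' k"
    if "\<gamma> \<in> Ls s" "\<gamma>' \<in> Ls s" "sval s \<gamma> = sval s \<gamma>'" "\<forall>n<k. \<gamma> n = \<gamma>' n" "\<gamma> k < \<gamma>' k"
    for \<gamma> \<gamma>'
  proof -
    have "\<gamma>' k < s"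
      using that(2) by (simp add: Ls_def)
    with sval_eq_first_difference[OF s that] show ?thesis
      by (auto simp: settles_at_def)
  qed
  show ?thesis
  proof (cases "\<alpha> k < \<alpha>' k")
    case True
    then show ?thesis
      using both_settle[OF \<alpha> eq prefix] that prefix by blast
  next
    case False
    then have "\<alpha>' k < \<alpha> k"
      using \<open>\<alpha> k \<noteq> \<alpha>' k\<close> by simp
    then show ?thesis
      using both_settle[OF \<alpha>(2,1) eq[symmetric]] that prefix by simp
  qed
qed

lemma floor_digits_partial_sum:
  fixes b :: nat and t :: real
  assumes "0 < b" "0 \<le> t" "t < 1"
  shows "(\<Sum>n<N. real (nat \<lfloor>real b ^ Suc n * t\<rfloor> mod b) / real b ^ Suc n)
    = real_of_int \<lfloor>real b ^ N * t\<rfloor> / real b ^ N"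
proof (induction N)
  case 0
  then show ?case using assms by (simp add: floor_eq_iff)
next
  case (Suc N)
  define x where "x = \<lfloor>real b ^ Suc N * t\<rfloor>"
  have "x \<ge> 0"
    unfolding x_def using assms by simp
  have "\<lfloor>real b ^ N * t\<rfloor> = \<lfloor>real b ^ Suc N * t / real_of_int (int b)\<rfloor>"
    using assms by simp
  also have "\<dots> = x div int b"
    unfolding x_def by (rule floor_divide_real_eq_div) simp
  finally have "\<lfloor>real b ^ N * t\<rfloor> = x div int b" .
  moreover have "nat x mod b = nat (x mod int b)"
    using \<open>x \<ge> 0\<close> by (simp add: nat_mod_distrib)
  then have "real (nat x mod b) = real_of_int (x mod int b)"
    using assms(1) by simp
  moreover have "real_of_int x = real b * real_of_int (x div int b) + real_of_int (x mod int b)"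
    by (metis div_mult_mod_eq of_int_add of_int_mult of_int_of_nat_eq mult.commute)
  ultimately show ?case
    unfolding sum.lessThan_Suc Suc.IH x_def[symmetric] using assms by (simp add: field_simps)
qed

lemma floor_scaled_tendsto:
  fixes b t :: real
  assumes "1 < b"
  shows "(\<lambda>N. real_of_int \<lfloor>b ^ N * t\<rfloor> / b ^ N) \<longlonglongrightarrow> t"
proof (rule tendsto_sandwich)
  have "(\<lambda>N. t - (1 / b) ^ N) \<longlonglongrightarrow> t - 0"
    using assms by (intro tendsto_diff tendsto_const LIMSEQ_power_zero) auto
  then show "(\<lambda>N. t - (1 / b) ^ N) \<longlonglongrightarrow> t"
    by simp
  show "\<forall>\<^sub>F N in sequentially. t - (1 / b) ^ N \<le> real_of_int \<lfloor>b ^ N * t\<rfloor> / b ^ N"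
  proof (rule always_eventually, rule allI)
    fix N
    have "t - (1 / b) ^ N = (b ^ N * t - 1) / b ^ N"
      using assms by (simp add: field_simps power_one_over)
    also have "\<dots> \<le> real_of_int \<lfloor>b ^ N * t\<rfloor> / b ^ N"
      using assms by (intro divide_right_mono) (linarith, simp)
    finally show "t - (1 / b) ^ N \<le> real_of_int \<lfloor>b ^ N * t\<rfloor> / b ^ N" .
  qed
  show "\<forall>\<^sub>F N in sequentially. real_of_int \<lfloor>b ^ N * t\<rfloor> / b ^ N \<le> t"
  proof (rule always_eventually, rule allI)
    fix N
    have "real_of_int \<lfloor>b ^ N * t\<rfloor> / b ^ N \<le> b ^ N * t / b ^ N"
      using assms by (intro divide_right_mono) (linarith, simp)
    then show "real_of_int \<lfloor>b ^ N * t\<rfloor> / b ^ N \<le> t"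
      using assms by simp
  qed
qed simp

lemma sums_floor_digits:
  fixes b :: nat and t :: real
  assumes "2 \<le> b" "0 \<le> t" "t < 1"
  shows "(\<lambda>n. real (nat \<lfloor>real b ^ Suc n * t\<rfloor> mod b) / real b ^ Suc n) sums t"
proof -
  have "(\<Sum>n<N. real (nat \<lfloor>real b ^ Suc n * t\<rfloor> mod b) / real b ^ Suc n)
      = real_of_int \<lfloor>real b ^ N * t\<rfloor> / real b ^ N" for N
    using assms by (intro floor_digits_partial_sum) auto
  then show ?thesis
    unfolding sums_def using assms by (simp add: floor_scaled_tendsto)
qed

lemma sval_image:
  assumes "2 \<le> s"
  shows "sval s ` Ls s = {0..1}"
proof
  show "sval s ` Ls s \<subseteq> {0..1}"
    using sval_in_unit[OF assms] by blast
  show "{0..1} \<subseteq> sval s ` Ls s"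
  proof
    fix t :: real assume t: "t \<in> {0..1}"
    show "t \<in> sval s ` Ls s"
    proof (cases "t = 1")
      case True
      have "(\<lambda>_. s - 1) \<in> Ls s"
        using assms by (intro const_in_Ls) simp
      then show ?thesis
        using True sval_eq_1_iff[OF assms] by (metis image_eqI)
    next
      case False
      define d where "d n = nat \<lfloor>real s ^ Suc n * t\<rfloor> mod s" for n
      have "d \<in> Ls s"
        unfolding d_def Ls_def using assms by auto
      moreover have "sval s d = t"
        unfolding sval_def d_def using assms t False
        by (intro sums_unique[symmetric] sums_floor_digits) auto
      ultimately show ?thesis
        by blast
    qed
  qed
qed

lemma encoding_map_inj_on:
  assumes "encoding_map h"
  shows "inj_on h {0..1}"
proof -
  consider "strict_mono_on {0..1} h" | "\<forall>x\<in>{0..1}. \<forall>y\<in>{0..1}. x < y \<longrightarrow> h y < h x"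
    using assms unfolding encoding_map_def by blast
  then show ?thesis
  proof cases
    case 1
    then show ?thesis by (rule strict_mono_on_imp_inj_on)
  next
    case 2
    then show ?thesis by (intro linorder_inj_onI') (metis less_irrefl)
  qed
qed

lemma DeltaS_image:
  assumes "encoding_map h" "2 \<le> s"
  shows "DeltaS h s ` Ls s = {0..1}"
  using assms sval_image[OF assms(2)] unfolding encoding_map_def DeltaS_def
  by (metis image_image)

lemma DeltaS_eq_iff:
  assumes "encoding_map h" "2 \<le> s" "\<alpha> \<in> Ls s" "\<alpha>' \<in> Ls s"
  shows "DeltaS h s \<alpha> = DeltaS h s \<alpha>' \<longleftrightarrow> sval s \<alpha> = sval s \<alpha>'"
  unfolding DeltaS_def using encoding_map_inj_on[OF assms(1)] sval_in_unit assms
  by (auto dest: inj_onD)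

lemma Delta2_eq_DeltaS: "Delta2 h = DeltaS h 2"
  by (simp add: fun_eq_iff Delta2_def DeltaS_def)

lemma Delta2_in_unit: "encoding_map h \<Longrightarrow> \<beta> \<in> Ls 2 \<Longrightarrow> Delta2 h \<beta> \<in> {0..1}"
  using DeltaS_image[of h 2] by (auto simp: Delta2_eq_DeltaS)

lemma beta_in_01: "beta A0 \<alpha> n \<in> {0, 1}"
  by (induction n) auto

lemma beta_le_1: "beta A0 \<alpha> n \<le> 1"
  using beta_in_01[of A0 \<alpha> n] by auto

lemma beta_in_Ls: "beta A0 \<alpha> \<in> Ls 2"
  using beta_le_1 unfolding Ls_def by (simp add: less_Suc_eq_le numeral_2_eq_2)

lemma beta_Suc_eq_iff: "beta A0 \<alpha> (Suc n) = beta A0 \<alpha> n \<longleftrightarrow> \<alpha> (Suc n) = \<alpha> n"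
  using beta_le_1[of A0 \<alpha> n] by (auto simp: le_Suc_eq)

lemma beta_cong_prefix: "\<forall>i\<le>n. \<alpha> i = \<alpha>' i \<Longrightarrow> beta A0 \<alpha> n = beta A0 \<alpha>' n"
  by (induction n) auto

lemma sval_beta_settles_at:
  assumes "settles_at \<alpha> k"
  shows "sval 2 (beta A0 \<alpha>) = (\<Sum>n<k. real (beta A0 \<alpha> n) / 2 ^ Suc n) + 1 / 2 ^ Suc k"
proof -
  have flipped: "beta A0 \<alpha> (m + Suc k) = 1 - beta A0 \<alpha> k" for m
  proof (induction m)
    case 0
    then show ?case
      using settles_atD(1)[OF assms] by simp
  next
    case (Suc m)
    have "\<alpha> (Suc m + Suc k) = \<alpha> (m + Suc k)"
      using settles_atD(2)[OF assms, of "Suc m + Suc k"] settles_atD(2)[OF assms, of "m + Suc k"]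
      by simp
    then show ?case
      using Suc.IH by simp
  qed
  have "sval 2 (\<lambda>n. beta A0 \<alpha> (n + Suc k)) = 1 - real (beta A0 \<alpha> k)"
    unfolding flipped using beta_le_1[of A0 \<alpha> k] by (simp add: sval_const of_nat_diff)
  moreover have "sval 2 (beta A0 \<alpha>) = (\<Sum>n<Suc k. real (beta A0 \<alpha> n) / 2 ^ Suc n)
      + sval 2 (\<lambda>n. beta A0 \<alpha> (n + Suc k)) / 2 ^ Suc k"
    using sval_split[of 2 "beta A0 \<alpha>" "Suc k"] beta_in_Ls[of A0 \<alpha>] by simp
  ultimately show ?thesis
    by (simp add: diff_divide_distrib)
qed

lemma sval_beta_eq:
  assumes "2 \<le> s" "\<alpha> \<in> Ls s" "\<alpha>' \<in> Ls s" "sval s \<alpha> = sval s \<alpha>'"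
  shows "sval 2 (beta A0 \<alpha>) = sval 2 (beta A0 \<alpha>')"
proof (cases "\<alpha> = \<alpha>'")
  case False
  then obtain k where "\<forall>n<k. \<alpha> n = \<alpha>' n" "settles_at \<alpha> k" "settles_at \<alpha>' k"
    using sval_eq_imp_settles_at assms by metis
  moreover from this(1) have "beta A0 \<alpha> n = beta A0 \<alpha>' n" if "n < k" for n
    using that by (intro beta_cong_prefix) auto
  ultimately show ?thesis
    by (simp add: sval_beta_settles_at)
qed simp

lemma fmap_DeltaS:
  assumes "2 \<le> s" "encoding_map hs" "\<alpha> \<in> Ls s"
  shows "fmap s hs h2 A0 (DeltaS hs s \<alpha>) = Delta2 h2 (beta A0 \<alpha>)"
proof -
  define \<alpha>' where "\<alpha>' = (SOME \<alpha>'. \<alpha>' \<in> Ls s \<and> DeltaS hs s \<alpha>' = DeltaS hs s \<alpha>)"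
  have "\<alpha>' \<in> Ls s \<and> DeltaS hs s \<alpha>' = DeltaS hs s \<alpha>"
    unfolding \<alpha>'_def by (rule someI[of _ \<alpha>]) (use assms in simp)
  then have "sval 2 (beta A0 \<alpha>') = sval 2 (beta A0 \<alpha>)"
    using assms DeltaS_eq_iff by (metis sval_beta_eq)
  then show ?thesis
    unfolding fmap_def \<alpha>'_def[symmetric] Delta2_def by simp
qed

lemma fmap_image_DeltaS:
  assumes "2 \<le> s" "encoding_map hs" "S \<subseteq> Ls s"
  shows "fmap s hs h2 A0 ` DeltaS hs s ` S = Delta2 h2 ` beta A0 ` S"
  using assms fmap_DeltaS by (force simp: image_image intro!: image_cong)

lemma fmap_level_set:
  assumes "2 \<le> s" "encoding_map hs" "encoding_map h2" "\<beta> \<in> Ls 2"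
  shows "{x \<in> {0..1}. fmap s hs h2 A0 x = Delta2 h2 \<beta>}
    = DeltaS hs s ` {\<alpha> \<in> Ls s. sval 2 (beta A0 \<alpha>) = sval 2 \<beta>}"
proof -
  have "Delta2 h2 (beta A0 \<alpha>) = Delta2 h2 \<beta> \<longleftrightarrow> sval 2 (beta A0 \<alpha>) = sval 2 \<beta>" for \<alpha>
    unfolding Delta2_eq_DeltaS using assms(3,4) beta_in_Ls by (intro DeltaS_eq_iff) auto
  then have "{\<alpha> \<in> Ls s. fmap s hs h2 A0 (DeltaS hs s \<alpha>) = Delta2 h2 \<beta>}
    = {\<alpha> \<in> Ls s. sval 2 (beta A0 \<alpha>) = sval 2 \<beta>}"
    using fmap_DeltaS[OF assms(1,2)] by auto
  moreover have "{x \<in> {0..1}. fmap s hs h2 A0 x = Delta2 h2 \<beta>}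
    = DeltaS hs s ` {\<alpha> \<in> Ls s. fmap s hs h2 A0 (DeltaS hs s \<alpha>) = Delta2 h2 \<beta>}"
    unfolding DeltaS_image[OF assms(2,1), symmetric] by blast
  ultimately show ?thesis
    by simp
qed

fun lift_code :: "nat \<Rightarrow> (nat \<Rightarrow> nat) \<Rightarrow> (nat \<Rightarrow> nat) \<Rightarrow> nat \<Rightarrow> nat" where
  "lift_code m \<alpha> \<beta> 0 = \<alpha> 0"
| "lift_code m \<alpha> \<beta> (Suc n) =
    (if Suc n < m then \<alpha> (Suc n)
     else if \<beta> (Suc n) = \<beta> n then lift_code m \<alpha> \<beta> n
     else if lift_code m \<alpha> \<beta> n = 0 then 1 else 0)"

lemma lift_code_in_Ls:
  assumes "2 \<le> s" "\<alpha> \<in> Ls s"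
  shows "lift_code m \<alpha> \<beta> \<in> Ls s"
proof -
  have "lift_code m \<alpha> \<beta> n < s" for n
    using assms by (induction n) (auto simp: Ls_def)
  then show ?thesis
    unfolding Ls_def by blast
qed

lemma lift_code_prefix: "n < m \<Longrightarrow> lift_code m \<alpha> \<beta> n = \<alpha> n"
  by (cases n) auto

lemma beta_lift_code:
  assumes "\<beta> \<in> Ls 2" "0 < m" "\<forall>n<m. \<beta> n = beta A0 \<alpha> n"
  shows "beta A0 (lift_code m \<alpha> \<beta>) = \<beta>"
proof
  fix n
  show "beta A0 (lift_code m \<alpha> \<beta>) n = \<beta> n"
  proof (induction n)
    case 0
    then show ?case
      using assms(2,3) by simp
  next
    case (Suc n)
    show ?case
    proof (cases "Suc n < m")
      case True
      then have "beta A0 (lift_code m \<alpha> \<beta>) (Suc n) = beta A0 \<alpha> (Suc n)"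
        by (intro beta_cong_prefix) (simp add: lift_code_prefix)
      then show ?thesis
        using True assms(3) by simp
    next
      case False
      have "\<beta> (Suc n) \<le> 1" "\<beta> n \<le> 1" "beta A0 (lift_code m \<alpha> \<beta>) (Suc n) \<le> 1"
        using Ls_le_pred[OF assms(1)] beta_le_1 by simp_all
      moreover have "lift_code m \<alpha> \<beta> (Suc n) = lift_code m \<alpha> \<beta> n \<longleftrightarrow> \<beta> (Suc n) = \<beta> n"
        using False by simp
      then have "beta A0 (lift_code m \<alpha> \<beta>) (Suc n) = beta A0 (lift_code m \<alpha> \<beta>) n \<longleftrightarrow> \<beta> (Suc n) = \<beta> n"
        by (simp only: beta_Suc_eq_iff)
      ultimately show ?thesis
        using Suc.IH
        by linarith
    qed
  qed
qed

definition codes_with_prefix :: "nat \<Rightarrow> nat list \<Rightarrow> (nat \<Rightarrow> nat) set" where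
  "codes_with_prefix s c = {\<alpha> \<in> Ls s. \<forall>i<length c. \<alpha> i = c ! i}"

lemma cylS_eq_image: "cylS hs s c = DeltaS hs s ` codes_with_prefix s c"
  unfolding cylS_def codes_with_prefix_def by blast

lemma cyl2_eq_image: "cyl2 h2 b = Delta2 h2 ` codes_with_prefix 2 b"
  unfolding cyl2_def codes_with_prefix_def by blast

lemma beta_image_codes_with_prefix:
  assumes "2 \<le> s" "c \<noteq> []" "set c \<subseteq> {..<s}"
  shows "beta A0 ` codes_with_prefix s c = codes_with_prefix 2 (map (beta A0 ((!) c)) [0..<length c])"
    (is "_ = codes_with_prefix 2 ?b")
proof
  have beta_prefix: "beta A0 \<alpha> i = ?b ! i" if "\<alpha> \<in> codes_with_prefix s c" "i < length c" for \<alpha> i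
    using that unfolding codes_with_prefix_def by (auto intro: beta_cong_prefix)
  then show "beta A0 ` codes_with_prefix s c \<subseteq> codes_with_prefix 2 ?b"
    unfolding codes_with_prefix_def[of 2] using beta_in_Ls by auto
  show "codes_with_prefix 2 ?b \<subseteq> beta A0 ` codes_with_prefix s c"
  proof
    fix \<beta> assume \<beta>: "\<beta> \<in> codes_with_prefix 2 ?b"
    define \<alpha> where "\<alpha> n = (if n < length c then c ! n else 0)" for n
    have "\<alpha> \<in> codes_with_prefix s c"
      unfolding \<alpha>_def codes_with_prefix_def Ls_def using assms nth_mem by fastforce
    then have lifted: "lift_code (length c) \<alpha> \<beta> \<in> codes_with_prefix s c"
      using lift_code_in_Ls[OF assms(1)] lift_code_prefix
      unfolding codes_with_prefix_def by simp
    have "beta A0 (lift_code (length c) \<alpha> \<beta>) = \<beta>"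
      using \<beta> beta_prefix[OF \<open>\<alpha> \<in> codes_with_prefix s c\<close>] assms(2)
      by (intro beta_lift_code) (auto simp: codes_with_prefix_def)
    then show "\<beta> \<in> beta A0 ` codes_with_prefix s c"
      using lifted by (metis image_eqI)
  qed
qed

lemma fmap_image_cylS:
  assumes "2 \<le> s" "encoding_map hs" "c \<noteq> []" "set c \<subseteq> {..<s}"
  shows "fmap s hs h2 A0 ` cylS hs s c = cyl2 h2 (map (beta A0 ((!) c)) [0..<length c])"
proof -
  have "codes_with_prefix s c \<subseteq> Ls s"
    unfolding codes_with_prefix_def by blast
  then show ?thesis
    using assms by (simp add: cylS_eq_image cyl2_eq_image fmap_image_DeltaS beta_image_codes_with_prefix)
qed

lemma beta_image_Ls:
  assumes "2 \<le> s" "a0 \<in> A0" "a0 < s" "a1 \<notin> A0" "a1 < s"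
  shows "beta A0 ` Ls s = Ls 2"
proof
  show "beta A0 ` Ls s \<subseteq> Ls 2"
    using beta_in_Ls by blast
  show "Ls 2 \<subseteq> beta A0 ` Ls s"
  proof
    fix \<beta> assume \<beta>: "\<beta> \<in> Ls 2"
    define a where "a = (if \<beta> 0 = 0 then a0 else a1)"
    have "(\<lambda>_. a) \<in> Ls s"
      unfolding a_def using assms by (simp add: const_in_Ls)
    moreover have "beta A0 (\<lambda>_. a) 0 = \<beta> 0"
      using Ls_le_pred[OF \<beta>, of 0] assms unfolding a_def by auto
    ultimately show "\<beta> \<in> beta A0 ` Ls s"
      using beta_lift_code[OF \<beta>, of 1 A0 "\<lambda>_. a"] lift_code_in_Ls[OF assms(1)]
      by (metis image_eqI less_one zero_less_one)
  qed
qed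

lemma beta_eq_0_iff: "beta A0 \<alpha> = (\<lambda>_. 0) \<longleftrightarrow> \<alpha> 0 \<in> A0 \<and> \<alpha> = (\<lambda>_. \<alpha> 0)"
proof
  assume zero: "beta A0 \<alpha> = (\<lambda>_. 0)"
  then have "\<alpha> (Suc n) = \<alpha> n" for n
    using beta_Suc_eq_iff[of A0 \<alpha> n] by simp
  then have "\<alpha> n = \<alpha> 0" for n
    by (induction n) auto
  moreover have "\<alpha> 0 \<in> A0"
    using fun_cong[OF zero, of 0] by (simp split: if_splits)
  ultimately show "\<alpha> 0 \<in> A0 \<and> \<alpha> = (\<lambda>_. \<alpha> 0)"
    by auto
next
  assume const: "\<alpha> 0 \<in> A0 \<and> \<alpha> = (\<lambda>_. \<alpha> 0)"
  have "beta A0 \<alpha> n = 0" for n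
  proof (induction n)
    case (Suc n)
    then show ?case
      using const beta_Suc_eq_iff[of A0 \<alpha> n] by metis
  qed (use const in simp)
  then show "beta A0 \<alpha> = (\<lambda>_. 0)" ..
qed

lemma codes_with_beta_sval_eq_0:
  assumes "2 \<le> s"
  shows "{\<alpha> \<in> Ls s. sval 2 (beta A0 \<alpha>) = 0} = (\<lambda>a _. a) ` ({..<s} \<inter> A0)"
  using sval_eq_0_iff[of 2, OF _ beta_in_Ls] beta_eq_0_iff[of A0] const_in_Ls
  by (fastforce simp: Ls_def)

lemma fmap_level_set_0:
  assumes "2 \<le> s" "encoding_map hs" "encoding_map h2"
  shows "{x \<in> {0..1}. fmap s hs h2 A0 x = Delta2 h2 (\<lambda>_. 0)} = DeltaS hs s ` (\<lambda>a _. a) ` ({..<s} \<inter> A0)"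
  using fmap_level_set[OF assms const_in_Ls] codes_with_beta_sval_eq_0[OF assms(1)]
  by (simp add: sval_def)

definition alternating :: "(nat \<Rightarrow> nat) \<Rightarrow> bool" where
  "alternating \<alpha> \<longleftrightarrow> (\<forall>n. \<alpha> (Suc n) \<noteq> \<alpha> n)"

lemma beta_alternating:
  assumes "alternating \<alpha>" "\<alpha> 0 \<in> A0"
  shows "beta A0 \<alpha> n = n mod 2"
  using assms by (induction n) (auto simp: alternating_def mod_Suc)

lemma inj_on_sval_alternating:
  assumes "2 \<le> s"
  shows "inj_on (sval s) {\<alpha> \<in> Ls s. alternating \<alpha>}"
proof (rule inj_onI, rule ccontr)
  fix \<alpha> \<alpha>' assume "\<alpha> \<in> {\<alpha> \<in> Ls s. alternating \<alpha>}" "\<alpha>' \<in> {\<alpha> \<in> Ls s. alternating \<alpha>}"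
    and eq: "sval s \<alpha> = sval s \<alpha>'" and "\<alpha> \<noteq> \<alpha>'"
  then have "\<alpha> \<in> Ls s" "\<alpha>' \<in> Ls s" "alternating \<alpha>"
    by simp_all
  then obtain k where "settles_at \<alpha> k"
    using sval_eq_imp_settles_at[OF assms _ _ eq \<open>\<alpha> \<noteq> \<alpha>'\<close>] by blast
  then have "\<alpha> (Suc (Suc k)) = \<alpha> (Suc k)"
    by (rule settles_atD(2)) simp
  then show False
    using \<open>alternating \<alpha>\<close> unfolding alternating_def by blast
qed

text \<open>With at least three digits every step of an alternating code offers two choices;
  this is where \<open>s > 2\<close> enters.\<close>
definition alt_digit :: "nat \<Rightarrow> bool \<Rightarrow> nat" where
  "alt_digit a b = (if b then (if a = 2 then 1 else 2) else (if a = 0 then 1 else 0))"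

fun alt_code :: "nat \<Rightarrow> nat set \<Rightarrow> nat \<Rightarrow> nat" where
  "alt_code a S 0 = a"
| "alt_code a S (Suc n) = alt_digit (alt_code a S n) (n \<in> S)"

lemma alt_code_in_Ls:
  assumes "2 < s" "a < s"
  shows "alt_code a S \<in> Ls s"
proof -
  have "alt_code a S n < s" for n
    using assms by (induction n) (auto simp: alt_digit_def)
  then show ?thesis
    unfolding Ls_def by blast
qed

lemma alternating_alt_code: "alternating (alt_code a S)"
  unfolding alternating_def by (simp add: alt_digit_def)

lemma inj_alt_code: "inj (alt_code a)"
proof
  fix S T assume eq: "alt_code a S = alt_code a T"
  have "n \<in> S \<longleftrightarrow> n \<in> T" for n
    using fun_cong[OF eq, of "Suc n"] fun_cong[OF eq, of n] by (auto simp: alt_digit_def split: if_splits)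
  then show "S = T"
    by blast
qed

lemma alternating_level_set_eqpoll:
  assumes "2 < s" "encoding_map hs" "encoding_map h2" "a \<in> A0" "a < s"
  shows "{x \<in> {0..1}. fmap s hs h2 A0 x = Delta2 h2 (\<lambda>n. n mod 2)} \<approx> (UNIV :: real set)"
    (is "?L \<approx> _")
proof (rule lepoll_antisym)
  show "?L \<lesssim> (UNIV :: real set)"
    by (rule subset_imp_lepoll) simp
  have s: "2 \<le> s"
    using assms(1) by simp
  have codes: "alt_code a S \<in> {\<alpha> \<in> Ls s. alternating \<alpha>}" for S
    using alt_code_in_Ls[OF assms(1,5)] alternating_alt_code by blast
  have "inj_on (DeltaS hs s \<circ> alt_code a) UNIV"
  proof (rule comp_inj_on[OF inj_alt_code], rule inj_onI)
    fix \<alpha> \<alpha>' assume "\<alpha> \<in> range (alt_code a)" "\<alpha>' \<in> range (alt_code a)"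
      and eq: "DeltaS hs s \<alpha> = DeltaS hs s \<alpha>'"
    then have alt: "\<alpha> \<in> {\<alpha> \<in> Ls s. alternating \<alpha>}" "\<alpha>' \<in> {\<alpha> \<in> Ls s. alternating \<alpha>}"
      using codes by blast+
    then have "sval s \<alpha> = sval s \<alpha>'"
      using eq DeltaS_eq_iff[OF assms(2) s] by simp
    then show "\<alpha> = \<alpha>'"
      by (rule inj_onD[OF inj_on_sval_alternating[OF s] _ alt])
  qed
  moreover have "(DeltaS hs s \<circ> alt_code a) ` UNIV \<subseteq> ?L"
  proof -
    have "(\<lambda>n. n mod 2) \<in> Ls 2"
      unfolding Ls_def by simp
    moreover have "beta A0 (alt_code a S) = (\<lambda>n. n mod 2)" for S
      using beta_alternating[OF alternating_alt_code] assms(4) by auto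
    ultimately show ?thesis
      unfolding fmap_level_set[OF s assms(2,3) \<open>(\<lambda>n. n mod 2) \<in> Ls 2\<close>] using codes by auto
  qed
  ultimately have "(UNIV :: nat set set) \<lesssim> ?L"
    unfolding lepoll_def by blast
  then show "(UNIV :: real set) \<lesssim> ?L"
    using nat_sets_eqpoll_reals eqpoll_sym lepoll_trans1 by blast
qed

theorem theorem2:
  fixes s :: nat and A0 A1 :: "nat set" and hs h2 :: "real \<Rightarrow> real"
  assumes "s > 2"
    and "A0 \<inter> A1 = {}" and "A0 \<union> A1 = {..<s}" and "A0 \<noteq> {..<s}" and "A1 \<noteq> {..<s}"
    and "encoding_map hs" and "encoding_map h2"
  shows "(fmap s hs h2 A0 ` {0..1} = {0..1}) \<and>
         (\<forall>c. c \<noteq> [] \<and> set c \<subseteq> {..<s} \<longrightarrow>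
           (\<exists>b. set b \<subseteq> {0,1} \<and> fmap s hs h2 A0 ` cylS hs s c = cyl2 h2 b)) \<and>
         (\<exists>y\<in>{0..1}. {x\<in>{0..1}. fmap s hs h2 A0 x = y} \<noteq> {} \<and>
           finite {x\<in>{0..1}. fmap s hs h2 A0 x = y}) \<and>
         (\<exists>y\<in>{0..1}. {x\<in>{0..1}. fmap s hs h2 A0 x = y} \<approx> (UNIV :: real set))"
proof (intro conjI allI impI)
  let ?f = "fmap s hs h2 A0"
  have s: "2 \<le> s"
    using assms(1) by simp
  obtain a0 where a0: "a0 \<in> A0" "a0 < s"
    using assms(3,5) by blast
  obtain a1 where a1: "a1 \<notin> A0" "a1 < s"
    using assms(3,4) by blast
  show "?f ` {0..1} = {0..1}"
    using DeltaS_image[OF assms(6) s] fmap_image_DeltaS[OF s assms(6) subset_refl]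
      beta_image_Ls[OF s a0 a1] DeltaS_image[OF assms(7), of 2]
    by (simp add: Delta2_eq_DeltaS)
  show "\<exists>b. set b \<subseteq> {0,1} \<and> ?f ` cylS hs s c = cyl2 h2 b" if "c \<noteq> [] \<and> set c \<subseteq> {..<s}" for c
  proof (intro exI conjI)
    show "set (map (beta A0 ((!) c)) [0..<length c]) \<subseteq> {0,1}"
      unfolding set_map by (intro image_subsetI beta_in_01)
    show "?f ` cylS hs s c = cyl2 h2 (map (beta A0 ((!) c)) [0..<length c])"
      using that by (intro fmap_image_cylS[OF s assms(6)]) auto
  qed
  show "\<exists>y\<in>{0..1}. {x \<in> {0..1}. ?f x = y} \<noteq> {} \<and> finite {x \<in> {0..1}. ?f x = y}"
    using fmap_level_set_0[OF s assms(6,7)] Delta2_in_unit[OF assms(7) const_in_Ls] a0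
    by (intro bexI[of _ "Delta2 h2 (\<lambda>_. 0)"]) auto
  show "\<exists>y\<in>{0..1}. {x \<in> {0..1}. ?f x = y} \<approx> (UNIV :: real set)"
    using alternating_level_set_eqpoll[OF assms(1,6,7) a0] Delta2_in_unit[OF assms(7)]
    by (intro bexI[of _ "Delta2 h2 (\<lambda>n. n mod 2)"]) (auto simp: Ls_def)
qed

end
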